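(* Assume $f$ is in Case 4. For every $0<l<\alpha$ there exist positive numbers $r_1,r_2$, which can be taken arbitrarily small, such that $f(U^{l,+}_{r_1,r_2})\subset U^{l,+}_{r_1,r_2}$, where $U^{l,+}_{r_1,r_2}=\{|z|<r_1,\ |w|<r_2|z|^l\}$.
   Context: Let $f(z,w)=(p(z),q(z,w))$ be a holomorphic skew product defined near the origin of $\mathbb{C}^2$ with $p(z)=az^{\delta}+O(z^{\delta+1})$, $a\neq0$, $\delta\ge2$, and $q(z,w)=\sum_{i,j\ge0}b_{ij}z^iw^j$ with $b_{00}=b_{01}=0$. The Newton polygon $N(q)$ is the convex hull of $\bigcup_{b_{ij}\ne0}\{(x,y):x\ge i,\ y\ge j\}$, with vertices $(n_1,m_1),\dots,(n_s,m_s)$, $n_1<\dots<n_s$, $m_1>\dots>m_s$. For $1\le k\le s-1$, $T_k$ is the $y$-intercept of the line through $(n_k,m_k)$ and $(n_{k+1},m_{k+1})$. Case 4 means $s>2$ and $T_k\le\delta\le T_{k-1}$ for some $2\le k\le s-1$; then set $(\gamma,d)=(n_k,m_k)$ (so $\gamma>0$, $\delta>d\ge1$) and $\alpha=\gamma/(\delta-d)$. *)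

theory Defs
  imports "HOL-Analysis.Analysis"
begin

text \<open>Newton polygon of a power series with coefficients b (i,j) of z^i w^j:
  convex hull of the union of the quadrants {x \<ge> i, y \<ge> j} over the support.\<close>
definition newton_polygon :: "(nat \<times> nat \<Rightarrow> complex) \<Rightarrow> (real \<times> real) set" where
  "newton_polygon b =
     convex hull (\<Union>ij\<in>{ij. b ij \<noteq> 0}. {xy. real (fst ij) \<le> fst xy \<and> real (snd ij) \<le> snd xy})"

definition np_vertices :: "(nat \<times> nat \<Rightarrow> complex) \<Rightarrow> (real \<times> real) set" where
  "np_vertices b = {v. v extreme_point_of newton_polygon b}"

definition np_num :: "(nat \<times> nat \<Rightarrow> complex) \<Rightarrow> nat" where
  "np_num b = card (np_vertices b)"

text \<open>The k-th vertex (n_k, m_k), 1-indexed, ordered by increasing first coordinate.\<close>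
definition np_vertex :: "(nat \<times> nat \<Rightarrow> complex) \<Rightarrow> nat \<Rightarrow> real \<times> real" where
  "np_vertex b k = (THE v. v \<in> np_vertices b \<and> card {u \<in> np_vertices b. fst u < fst v} = k - 1)"

text \<open>T_k: y-intercept of the line through the k-th and (k+1)-th vertices.\<close>
definition np_T :: "(nat \<times> nat \<Rightarrow> complex) \<Rightarrow> nat \<Rightarrow> real" where
  "np_T b k = (let n1 = fst (np_vertex b k); m1 = snd (np_vertex b k);
                   n2 = fst (np_vertex b (Suc k)); m2 = snd (np_vertex b (Suc k))
               in m1 + n1 * (m1 - m2) / (n2 - n1))"

definition U_region :: "real \<Rightarrow> real \<Rightarrow> real \<Rightarrow> (complex \<times> complex) set" where
  "U_region l r1 r2 = {(z, w). cmod z < r1 \<and> cmod w < r2 * cmod z powr l}"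

end

theory Submission
  imports Defs
begin

text \<open>
  Every monomial z^i w^j of q has weight i + l j \<ge> \<delta> l, with strict inequality when j \<le> 1
  (then i > 0, because b(0,0) = b(0,1) = 0). Indeed, the Newton polygon lies above the two
  edges meeting at its vertex (\<gamma>, d), whose y-intercepts are T(k-1) \<ge> \<delta> and T(k) \<le> \<delta>; the
  line x + l y = \<delta> l passes through (0, \<delta>), passes below the vertex because l < \<alpha>, and is
  steeper than the right edge because T(k) \<le> \<delta>. As the exponents are integers, the strict
  weights exceed \<delta> l by a uniform \<eta> > 0. Hence on U(l, r1, r2) we get
  |q(z,w)| \<le> K |z|^(\<delta> l) (|z|^\<eta> + r2^2), while |a|/2 |z|^\<delta> \<le> |p(z)| < |z|; choosing first r2
  and then r1 small enough gives |q(z,w)| < r2 |p(z)|^l.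
\<close>

lemma convex_combination_eq_lower_bound:
  fixes u X Y m :: real
  assumes "0 < u" "u < 1" "m \<le> X" "m \<le> Y" "(1 - u) * X + u * Y \<le> m"
  shows "X = m" "Y = m"
proof -
  have "0 \<le> (1 - u) * (X - m)" "0 \<le> u * (Y - m)" using assms by simp_all
  moreover have "(1 - u) * (X - m) + u * (Y - m) \<le> 0" using assms(5) by (simp add: algebra_simps)
  ultimately have "(1 - u) * (X - m) = 0" "u * (Y - m) = 0" by linarith+
  then show "X = m" "Y = m" using assms(1,2) by simp_all
qed

lemma convex_lex_halfspace:
  fixes a c :: "'a::real_inner"
  shows "convex {x. m < a \<bullet> x \<or> (a \<bullet> x = m \<and> e \<le> c \<bullet> x)}"
  unfolding convex_alt Ball_def mem_Collect_eq
proof (intro allI impI)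
  fix x y and u :: real
  assume x: "m < a \<bullet> x \<or> (a \<bullet> x = m \<and> e \<le> c \<bullet> x)"
    and y: "m < a \<bullet> y \<or> (a \<bullet> y = m \<and> e \<le> c \<bullet> y)" and u: "0 \<le> u \<and> u \<le> 1"
  have "m < (1 - u) * (a \<bullet> x) + u * (a \<bullet> y) \<or>
    ((1 - u) * (a \<bullet> x) + u * (a \<bullet> y) = m \<and> e \<le> (1 - u) * (c \<bullet> x) + u * (c \<bullet> y))"
  proof (cases "u = 0 \<or> u = 1 \<or> m < (1 - u) * (a \<bullet> x) + u * (a \<bullet> y)")
    case True
    then show ?thesis using x y by auto
  next
    case False
    then have "a \<bullet> x = m" "a \<bullet> y = m"
      using convex_combination_eq_lower_bound[of u m "a \<bullet> x" "a \<bullet> y"] x y u by force+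
    moreover have "(1 - u) * e + u * e \<le> (1 - u) * (c \<bullet> x) + u * (c \<bullet> y)"
      using x y u calculation by (intro add_mono mult_left_mono) auto
    ultimately show ?thesis by (simp add: algebra_simps)
  qed
  then show "m < a \<bullet> ((1 - u) *\<^sub>R x + u *\<^sub>R y) \<or>
    (a \<bullet> ((1 - u) *\<^sub>R x + u *\<^sub>R y) = m \<and> e \<le> c \<bullet> ((1 - u) *\<^sub>R x + u *\<^sub>R y))"
    by (simp add: inner_add_right)
qed

lemma extreme_point_of_lex_halfspace:
  fixes a c p :: "'a::real_inner"
  assumes S: "S \<subseteq> {x. m < a \<bullet> x \<or> (a \<bullet> x = m \<and> e \<le> c \<bullet> x)}" and p: "p \<in> S" "a \<bullet> p = m" "c \<bullet> p = e"
    and unique: "\<And>x. a \<bullet> x = m \<Longrightarrow> c \<bullet> x = e \<Longrightarrow> x = p"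
  shows "p extreme_point_of S"
  unfolding extreme_point_of_def
proof (intro conjI p ballI notI)
  fix x y assume "x \<in> S" "y \<in> S" "p \<in> open_segment x y"
  then obtain u where xy: "x \<noteq> y" "0 < u" "u < 1" "p = (1 - u) *\<^sub>R x + u *\<^sub>R y"
    and x: "m < a \<bullet> x \<or> (a \<bullet> x = m \<and> e \<le> c \<bullet> x)" and y: "m < a \<bullet> y \<or> (a \<bullet> y = m \<and> e \<le> c \<bullet> y)"
    using S unfolding in_segment by blast
  have "a \<bullet> x = m" "a \<bullet> y = m"
    using convex_combination_eq_lower_bound[of u m "a \<bullet> x" "a \<bullet> y"] xy x y p(2)
    by (force simp: inner_add_right)+
  moreover from this have "c \<bullet> x = e" "c \<bullet> y = e"
    using convex_combination_eq_lower_bound[of u e "c \<bullet> x" "c \<bullet> y"] xy x y p(3)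
    by (force simp: inner_add_right)+
  ultimately show False using unique xy(1) by metis
qed

section \<open>The Newton polygon\<close>

definition np_quadrants :: "(nat \<times> nat \<Rightarrow> complex) \<Rightarrow> (real \<times> real) set" where
  "np_quadrants b = (\<Union>ij\<in>{ij. b ij \<noteq> 0}. {xy. real (fst ij) \<le> fst xy \<and> real (snd ij) \<le> snd xy})"

lemma newton_polygon_eq_hull_quadrants: "newton_polygon b = convex hull np_quadrants b"
  unfolding newton_polygon_def np_quadrants_def ..

lemma mem_np_quadrants:
  "x \<in> np_quadrants b \<longleftrightarrow> (\<exists>i j. b (i, j) \<noteq> 0 \<and> real i \<le> fst x \<and> real j \<le> snd x)"
  unfolding np_quadrants_def by auto

lemma convex_newton_polygon: "convex (newton_polygon b)"
  unfolding newton_polygon_def by simp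

lemma support_mem_newton_polygon:
  assumes "b (i, j) \<noteq> 0"
  shows "(real i, real j) \<in> newton_polygon b"
  unfolding newton_polygon_eq_hull_quadrants
  by (rule hull_inc) (use assms in \<open>auto simp: mem_np_quadrants\<close>)

lemma newton_polygon_add_nonneg:
  assumes "x \<in> newton_polygon b" "0 \<le> c\<^sub>1" "0 \<le> c\<^sub>2"
  shows "x + (c\<^sub>1, c\<^sub>2) \<in> newton_polygon b"
proof -
  have "(\<lambda>y. (c\<^sub>1, c\<^sub>2) + y) ` np_quadrants b \<subseteq> np_quadrants b"
    using assms(2,3) by (force simp: mem_np_quadrants)
  then have "(\<lambda>y. (c\<^sub>1, c\<^sub>2) + y) ` newton_polygon b \<subseteq> newton_polygon b"
    unfolding newton_polygon_eq_hull_quadrants convex_hull_translation[symmetric] by (rule hull_mono)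
  then show ?thesis using assms(1) by (auto simp: add.commute)
qed

lemma newton_polygon_fst_nonneg:
  assumes "x \<in> newton_polygon b"
  shows "0 \<le> fst x"
proof -
  have "newton_polygon b \<subseteq> {x. 0 \<le> (1, 0) \<bullet> x}"
    unfolding newton_polygon_eq_hull_quadrants
    by (intro hull_minimal convex_halfspace_ge) (force simp: mem_np_quadrants)
  then show ?thesis using assms by (cases x) force
qed

lemma extreme_point_newton_polygon_minimal:
  assumes v: "v extreme_point_of newton_polygon b" and x: "x \<in> newton_polygon b"
    and "fst x \<le> fst v" "snd x \<le> snd v"
  shows "x = v"
proof (rule ccontr)
  assume "x \<noteq> v"
  define y where "y = x + (2 * (fst v - fst x), 2 * (snd v - snd x))"
  have "y \<in> newton_polygon b"
    unfolding y_def using assms by (intro newton_polygon_add_nonneg) auto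
  moreover have "v \<in> open_segment x y"
    unfolding in_segment y_def using \<open>x \<noteq> v\<close>
    by (intro conjI exI[of _ "1/2"]) (auto simp: prod_eq_iff algebra_simps)
  ultimately show False using v x unfolding extreme_point_of_def by blast
qed

lemma extreme_points_newton_polygon_eq:
  assumes "u extreme_point_of newton_polygon b" "v extreme_point_of newton_polygon b"
    and "fst u = fst v"
  shows "u = v"
  using extreme_point_newton_polygon_minimal[OF assms(1), of v]
    extreme_point_newton_polygon_minimal[OF assms(2), of u] assms
  unfolding extreme_point_of_def by fastforce

lemma extreme_points_newton_polygon_snd_less:
  assumes "u extreme_point_of newton_polygon b" "v extreme_point_of newton_polygon b"
    and "fst u < fst v"
  shows "snd v < snd u"
  using extreme_point_newton_polygon_minimal[OF assms(2), of u] assms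
  unfolding extreme_point_of_def by force

lemma finite_lattice_points_below_line:
  assumes "0 < \<sigma>"
  shows "finite {ij :: nat \<times> nat. real (snd ij) + \<sigma> * real (fst ij) \<le> c}"
proof (rule finite_subset)
  have "i \<le> nat \<lceil>c / \<sigma>\<rceil> \<and> j \<le> nat \<lceil>c\<rceil>" if below: "real j + \<sigma> * real i \<le> c" for i j :: nat
  proof -
    have "0 \<le> \<sigma> * real i" using assms by simp
    then have "real j \<le> c" using below by simp
    moreover have "real i \<le> c / \<sigma>" using below assms by (simp add: field_simps)
    ultimately show ?thesis by linarith
  qed
  then show "{ij :: nat \<times> nat. real (snd ij) + \<sigma> * real (fst ij) \<le> c} \<subseteq> {..nat \<lceil>c / \<sigma>\<rceil>} \<times> {..nat \<lceil>c\<rceil>}"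
    by auto
qed simp

lemma support_lex_minimizer:
  assumes \<sigma>: "0 < \<sigma>" and s: "b s \<noteq> 0"
  obtains i\<^sub>0 j\<^sub>0 where "b (i\<^sub>0, j\<^sub>0) \<noteq> 0"
    "\<And>i j. b (i, j) \<noteq> 0 \<Longrightarrow> real j\<^sub>0 + \<sigma> * real i\<^sub>0 \<le> real j + \<sigma> * real i"
    "\<And>i j. b (i, j) \<noteq> 0 \<Longrightarrow> real j + \<sigma> * real i = real j\<^sub>0 + \<sigma> * real i\<^sub>0 \<Longrightarrow> i\<^sub>0 \<le> i"
proof -
  define \<psi> where "\<psi> ij = real (snd ij) + \<sigma> * real (fst ij)" for ij :: "nat \<times> nat"
  define S\<^sub>0 where "S\<^sub>0 = {ij. b ij \<noteq> 0 \<and> \<psi> ij \<le> \<psi> s}"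
  have "finite S\<^sub>0"
    using finite_lattice_points_below_line[OF \<sigma>, of "\<psi> s"] unfolding S\<^sub>0_def \<psi>_def
    by (rule rev_finite_subset) auto
  have "s \<in> S\<^sub>0" using s unfolding S\<^sub>0_def by simp
  define m where "m = Min (\<psi> ` S\<^sub>0)"
  define S\<^sub>1 where "S\<^sub>1 = {ij \<in> S\<^sub>0. \<psi> ij = m}"
  have "m \<in> \<psi> ` S\<^sub>0" unfolding m_def using \<open>finite S\<^sub>0\<close> \<open>s \<in> S\<^sub>0\<close> by (intro Min_in) auto
  then have "S\<^sub>1 \<noteq> {}" "finite S\<^sub>1" unfolding S\<^sub>1_def using \<open>finite S\<^sub>0\<close> by auto
  then have "Min (fst ` S\<^sub>1) \<in> fst ` S\<^sub>1" by (intro Min_in) auto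
  then obtain p\<^sub>0 where p\<^sub>0: "b p\<^sub>0 \<noteq> 0" "\<psi> p\<^sub>0 = m" "fst p\<^sub>0 = Min (fst ` S\<^sub>1)"
    unfolding S\<^sub>1_def S\<^sub>0_def by auto
  have m_le: "m \<le> \<psi> ij" if "b ij \<noteq> 0" for ij
  proof (cases "ij \<in> S\<^sub>0")
    case True
    then show ?thesis unfolding m_def using \<open>finite S\<^sub>0\<close> by simp
  next
    case False
    then have "\<psi> s < \<psi> ij" using that unfolding S\<^sub>0_def by auto
    moreover have "m \<le> \<psi> s" unfolding m_def using \<open>finite S\<^sub>0\<close> \<open>s \<in> S\<^sub>0\<close> by simp
    ultimately show ?thesis by simp
  qed
  have fst_le: "fst p\<^sub>0 \<le> fst ij" if "b ij \<noteq> 0" "\<psi> ij = m" for ij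
  proof -
    have "ij \<in> S\<^sub>1" using that m_le[OF s] unfolding S\<^sub>1_def S\<^sub>0_def by simp
    then show ?thesis unfolding p\<^sub>0(3) using \<open>finite S\<^sub>1\<close> by simp
  qed
  show thesis
  proof (rule that[of "fst p\<^sub>0" "snd p\<^sub>0"])
    show "b (fst p\<^sub>0, snd p\<^sub>0) \<noteq> 0" using p\<^sub>0(1) by simp
    show "real (snd p\<^sub>0) + \<sigma> * real (fst p\<^sub>0) \<le> real j + \<sigma> * real i" if "b (i, j) \<noteq> 0" for i j
      using m_le[OF that] p\<^sub>0(2) unfolding \<psi>_def by simp
    show "fst p\<^sub>0 \<le> i"
      if "b (i, j) \<noteq> 0" "real j + \<sigma> * real i = real (snd p\<^sub>0) + \<sigma> * real (fst p\<^sub>0)" for i j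
      using fst_le[of "(i, j)"] that p\<^sub>0(2) unfolding \<psi>_def by simp
  qed
qed

lemma newton_polygon_extreme_minimizer:
  assumes \<sigma>: "0 < \<sigma>" and s: "b s \<noteq> 0"
  obtains p where "p extreme_point_of newton_polygon b"
    "\<And>i j. b (i, j) \<noteq> 0 \<Longrightarrow> snd p + \<sigma> * fst p \<le> real j + \<sigma> * real i"
proof -
  obtain i\<^sub>0 j\<^sub>0 where p\<^sub>0: "b (i\<^sub>0, j\<^sub>0) \<noteq> 0"
    and min: "\<And>i j. b (i, j) \<noteq> 0 \<Longrightarrow> real j\<^sub>0 + \<sigma> * real i\<^sub>0 \<le> real j + \<sigma> * real i"
    and tie: "\<And>i j. b (i, j) \<noteq> 0 \<Longrightarrow> real j + \<sigma> * real i = real j\<^sub>0 + \<sigma> * real i\<^sub>0 \<Longrightarrow> i\<^sub>0 \<le> i"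
    using support_lex_minimizer[of \<sigma> b s, OF \<sigma> s] by blast
  define m where "m = real j\<^sub>0 + \<sigma> * real i\<^sub>0"
  define p where "p = (real i\<^sub>0, real j\<^sub>0)"
  \<comment> \<open>The lexicographic minimiser is extreme because the whole polygon lies in the
    lexicographic half-plane it bounds.\<close>
  have "newton_polygon b \<subseteq> {x. m < (\<sigma>, 1) \<bullet> x \<or> ((\<sigma>, 1) \<bullet> x = m \<and> real i\<^sub>0 \<le> (1, 0) \<bullet> x)}"
    unfolding newton_polygon_eq_hull_quadrants
  proof (intro hull_minimal convex_lex_halfspace subsetI CollectI)
    fix q assume "q \<in> np_quadrants b"
    then obtain i j where ij: "b (i, j) \<noteq> 0" "real i \<le> fst q" "real j \<le> snd q"
      by (auto simp: mem_np_quadrants)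
    obtain q\<^sub>1 q\<^sub>2 where q: "q = (q\<^sub>1, q\<^sub>2)" by fastforce
    have "\<sigma> * real i \<le> \<sigma> * q\<^sub>1" using ij(2) \<sigma> q by (intro mult_left_mono) auto
    then have above: "real j + \<sigma> * real i \<le> \<sigma> * q\<^sub>1 + q\<^sub>2" using ij(3) q by simp
    have "m \<le> real j + \<sigma> * real i" unfolding m_def by (rule min[OF ij(1)])
    show "m < (\<sigma>, 1) \<bullet> q \<or> ((\<sigma>, 1) \<bullet> q = m \<and> real i\<^sub>0 \<le> (1, 0) \<bullet> q)"
    proof (cases "m < \<sigma> * q\<^sub>1 + q\<^sub>2")
      case True
      then show ?thesis using q by simp
    next
      case False
      then have on_line: "\<sigma> * q\<^sub>1 + q\<^sub>2 = m" "real j + \<sigma> * real i = m"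
        using \<open>m \<le> real j + \<sigma> * real i\<close> above by linarith+
      then have "\<sigma> * (q\<^sub>1 - real i) \<le> 0" using ij(3) q by (simp add: algebra_simps)
      then have "q\<^sub>1 = real i" using ij(2) q \<sigma> by (simp add: mult_le_0_iff)
      then show ?thesis using on_line tie[OF ij(1)] q unfolding m_def by simp
    qed
  qed
  then have "p extreme_point_of newton_polygon b"
  proof (rule extreme_point_of_lex_halfspace)
    show "p \<in> newton_polygon b" unfolding p_def using p\<^sub>0 by (rule support_mem_newton_polygon)
    show "(\<sigma>, 1) \<bullet> p = m" "(1, 0) \<bullet> p = real i\<^sub>0" unfolding p_def m_def by simp_all
    show "x = p" if "(\<sigma>, 1) \<bullet> x = m" "(1, 0) \<bullet> x = real i\<^sub>0" for x
      using that unfolding p_def m_def by (cases x) simp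
  qed
  moreover have "snd p + \<sigma> * fst p \<le> real j + \<sigma> * real i" if "b (i, j) \<noteq> 0" for i j
    using min[OF that] unfolding p_def by simp
  ultimately show thesis by (rule that)
qed

lemma extreme_point_below_chord:
  assumes u: "u extreme_point_of newton_polygon b"
    and x: "x \<in> newton_polygon b" and y: "y \<in> newton_polygon b"
    and "fst x \<le> fst u" "fst u \<le> fst y" "fst x < fst y"
  shows "(snd u + \<sigma> * fst u) * (fst y - fst x)
    \<le> (snd x + \<sigma> * fst x) * (fst y - fst u) + (snd y + \<sigma> * fst y) * (fst u - fst x)"
proof -
  define t where "t = (fst u - fst x) / (fst y - fst x)"
  have t: "0 \<le> t" "t \<le> 1" "t * (fst y - fst x) = fst u - fst x"
    using assms(4-6) unfolding t_def by (auto simp: divide_simps)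
  define c where "c = (1 - t) *\<^sub>R x + t *\<^sub>R y"
  have c: "c \<in> newton_polygon b"
    unfolding c_def using convexD_alt[OF convex_newton_polygon x y] t by simp
  have fst_c: "fst c = fst u" unfolding c_def using t(3) by (simp add: algebra_simps)
  have "snd u \<le> snd c"
  proof (rule ccontr)
    assume "\<not> snd u \<le> snd c"
    then have "c = u" using extreme_point_newton_polygon_minimal[OF u c] fst_c by simp
    then show False using \<open>\<not> snd u \<le> snd c\<close> by simp
  qed
  then have "snd u + \<sigma> * fst u \<le> snd c + \<sigma> * fst c" using fst_c by simp
  also have "\<dots> = (1 - t) * (snd x + \<sigma> * fst x) + t * (snd y + \<sigma> * fst y)"
    unfolding c_def by (simp add: algebra_simps)
  finally have "(snd u + \<sigma> * fst u) * (fst y - fst x)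
      \<le> ((1 - t) * (snd x + \<sigma> * fst x) + t * (snd y + \<sigma> * fst y)) * (fst y - fst x)"
    using assms(6) by (intro mult_right_mono) auto
  also have "\<dots> = (snd x + \<sigma> * fst x) * ((1 - t) * (fst y - fst x))
      + (snd y + \<sigma> * fst y) * (t * (fst y - fst x))"
    by (simp add: algebra_simps)
  also have "(1 - t) * (fst y - fst x) = fst y - fst u" using t(3) by (simp add: algebra_simps)
  finally show ?thesis unfolding t(3) .
qed

lemma support_above_edge:
  assumes u: "u extreme_point_of newton_polygon b" and v: "v extreme_point_of newton_polygon b"
    and uv: "fst u < fst v" and slope: "\<sigma> * (fst v - fst u) = snd u - snd v"
    and no_vertex_between:
      "\<And>x. x extreme_point_of newton_polygon b \<Longrightarrow> fst u < fst x \<Longrightarrow> fst x < fst v \<Longrightarrow> False"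
    and ij: "b (i, j) \<noteq> 0"
  shows "snd u + \<sigma> * fst u \<le> real j + \<sigma> * real i"
proof -
  define \<Psi> where "\<Psi> q = snd q + \<sigma> * fst q" for q :: "real \<times> real"
  have "0 < \<sigma> * (fst v - fst u)" using extreme_points_newton_polygon_snd_less[OF u v uv] slope by simp
  then have "0 < \<sigma>" using uv by (simp add: zero_less_mult_iff)
  then obtain p where p: "p extreme_point_of newton_polygon b"
    "\<And>i j. b (i, j) \<noteq> 0 \<Longrightarrow> \<Psi> p \<le> real j + \<sigma> * real i"
    using newton_polygon_extreme_minimizer ij unfolding \<Psi>_def by metis
  have P: "u \<in> newton_polygon b" "v \<in> newton_polygon b" "p \<in> newton_polygon b"
    using u v p(1) unfolding extreme_point_of_def by auto
  have \<Psi>_uv: "\<Psi> v = \<Psi> u" using slope unfolding \<Psi>_def by (simp add: algebra_simps)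
  have "\<Psi> u \<le> \<Psi> p"
  proof (rule ccontr)
    assume below: "\<not> \<Psi> u \<le> \<Psi> p"
    consider "fst p \<le> fst u" | "fst v \<le> fst p" | "fst u < fst p" "fst p < fst v" by linarith
    then show False
    proof cases
      case 1
      with extreme_point_below_chord[OF u P(3) P(2) 1] uv
      have "\<Psi> u * (fst v - fst p) \<le> \<Psi> p * (fst v - fst u) + \<Psi> v * (fst u - fst p)"
        unfolding \<Psi>_def by simp
      then have "\<Psi> u * (fst v - fst u) \<le> \<Psi> p * (fst v - fst u)"
        unfolding \<Psi>_uv by (simp add: algebra_simps)
      then show False using below uv by simp
    next
      case 2
      with extreme_point_below_chord[OF v P(1) P(3)] uv
      have "\<Psi> v * (fst p - fst u) \<le> \<Psi> u * (fst p - fst v) + \<Psi> p * (fst v - fst u)"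
        unfolding \<Psi>_def by simp
      then have "\<Psi> u * (fst v - fst u) \<le> \<Psi> p * (fst v - fst u)"
        unfolding \<Psi>_uv by (simp add: algebra_simps)
      then show False using below uv by simp
    next
      case 3
      then show False using no_vertex_between[OF p(1)] by simp
    qed
  qed
  then show ?thesis using p(2)[OF ij] unfolding \<Psi>_def by simp
qed

definition np_rank :: "(nat \<times> nat \<Rightarrow> complex) \<Rightarrow> real \<times> real \<Rightarrow> nat" where
  "np_rank b x = card {u \<in> np_vertices b. fst u < fst x}"

lemma np_rank_mono:
  assumes "finite (np_vertices b)" "fst x \<le> fst y"
  shows "np_rank b x \<le> np_rank b y"
  unfolding np_rank_def using assms by (intro card_mono) auto

lemma np_rank_strict_mono:
  assumes fin: "finite (np_vertices b)" and x: "x \<in> np_vertices b" and "fst x < fst y"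
  shows "np_rank b x < np_rank b y"
proof -
  have "insert x {u \<in> np_vertices b. fst u < fst x} \<subseteq> {u \<in> np_vertices b. fst u < fst y}"
    using assms by auto
  then have "card (insert x {u \<in> np_vertices b. fst u < fst x}) \<le> np_rank b y"
    unfolding np_rank_def using fin by (intro card_mono) auto
  then show ?thesis unfolding np_rank_def using fin by simp
qed

lemma inj_on_np_rank:
  assumes fin: "finite (np_vertices b)"
  shows "inj_on (np_rank b) (np_vertices b)"
proof (rule inj_onI)
  fix x y assume x: "x \<in> np_vertices b" and y: "y \<in> np_vertices b" and "np_rank b x = np_rank b y"
  then have "fst x = fst y" using np_rank_strict_mono[OF fin x, of y] np_rank_strict_mono[OF fin y, of x]
    by (cases "fst x" "fst y" rule: linorder_cases) simp_all
  then show "x = y" using x y extreme_points_newton_polygon_eq unfolding np_vertices_def by blast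
qed

lemma np_rank_image:
  assumes fin: "finite (np_vertices b)"
  shows "np_rank b ` np_vertices b = {..<card (np_vertices b)}"
proof (rule card_subset_eq)
  show "np_rank b ` np_vertices b \<subseteq> {..<card (np_vertices b)}"
    unfolding np_rank_def using fin by (auto intro!: psubset_card_mono)
  show "card (np_rank b ` np_vertices b) = card {..<card (np_vertices b)}"
    using card_image[OF inj_on_np_rank[OF fin]] by simp
qed simp

lemma np_vertex_spec:
  assumes fin: "finite (np_vertices b)" and "1 \<le> e" "e \<le> card (np_vertices b)"
  shows "np_vertex b e \<in> np_vertices b" "np_rank b (np_vertex b e) = e - 1"
proof -
  have "e - 1 \<in> np_rank b ` np_vertices b" unfolding np_rank_image[OF fin] using assms(2,3) by simp
  then obtain x where x: "x \<in> np_vertices b" "np_rank b x = e - 1" by (metis imageE)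
  have "np_vertex b e = x" unfolding np_vertex_def
  proof (rule the_equality)
    show "x \<in> np_vertices b \<and> card {u \<in> np_vertices b. fst u < fst x} = e - 1"
      using x unfolding np_rank_def by simp
  next
    fix y assume "y \<in> np_vertices b \<and> card {u \<in> np_vertices b. fst u < fst y} = e - 1"
    then show "y = x" using x inj_onD[OF inj_on_np_rank[OF fin], of y x] unfolding np_rank_def by simp
  qed
  then show "np_vertex b e \<in> np_vertices b" "np_rank b (np_vertex b e) = e - 1" using x by simp_all
qed

lemma np_vertex_consecutive:
  assumes fin: "finite (np_vertices b)" and "1 \<le> e" "Suc e \<le> card (np_vertices b)"
  shows "fst (np_vertex b e) < fst (np_vertex b (Suc e))"
    and "\<And>x. x \<in> np_vertices b \<Longrightarrow> fst (np_vertex b e) < fst x \<Longrightarrow> fst x < fst (np_vertex b (Suc e)) \<Longrightarrow> False"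
proof -
  have e: "np_vertex b e \<in> np_vertices b" "np_rank b (np_vertex b e) = e - 1"
    and Suc_e: "np_vertex b (Suc e) \<in> np_vertices b" "np_rank b (np_vertex b (Suc e)) = e"
    using np_vertex_spec[OF fin, of e] np_vertex_spec[OF fin, of "Suc e"] assms(2,3) by simp_all
  show "fst (np_vertex b e) < fst (np_vertex b (Suc e))"
    using np_rank_mono[OF fin, of "np_vertex b (Suc e)" "np_vertex b e"] e Suc_e assms(2) by linarith
  fix x assume x: "x \<in> np_vertices b" "fst (np_vertex b e) < fst x" "fst x < fst (np_vertex b (Suc e))"
  show False
    using np_rank_strict_mono[OF fin e(1) x(2)] np_rank_strict_mono[OF fin x(1) x(3)] e Suc_e by simp
qed

lemma np_edge_vertices:
  assumes "1 \<le> e" "Suc e \<le> np_num b"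
  shows "np_vertex b e extreme_point_of newton_polygon b"
    and "np_vertex b (Suc e) extreme_point_of newton_polygon b"
    and "fst (np_vertex b e) < fst (np_vertex b (Suc e))"
    and "\<And>x. x extreme_point_of newton_polygon b \<Longrightarrow> fst (np_vertex b e) < fst x
      \<Longrightarrow> fst x < fst (np_vertex b (Suc e)) \<Longrightarrow> False"
proof -
  have fin: "finite (np_vertices b)" using assms(2) unfolding np_num_def by (metis card.infinite not_less_eq_eq zero_le)
  have card: "1 \<le> e" "Suc e \<le> card (np_vertices b)" using assms unfolding np_num_def by simp_all
  show "np_vertex b e extreme_point_of newton_polygon b"
    "np_vertex b (Suc e) extreme_point_of newton_polygon b"
    using np_vertex_spec(1)[OF fin, of e] np_vertex_spec(1)[OF fin, of "Suc e"] card
    unfolding np_vertices_def by simp_all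
  show "fst (np_vertex b e) < fst (np_vertex b (Suc e))" by (rule np_vertex_consecutive(1)[OF fin card])
  show "False" if "x extreme_point_of newton_polygon b" "fst (np_vertex b e) < fst x"
    "fst x < fst (np_vertex b (Suc e))" for x
    using np_vertex_consecutive(2)[OF fin card, of x] that unfolding np_vertices_def by simp
qed

definition np_slope :: "(nat \<times> nat \<Rightarrow> complex) \<Rightarrow> nat \<Rightarrow> real" where
  "np_slope b e = (snd (np_vertex b e) - snd (np_vertex b (Suc e)))
    / (fst (np_vertex b (Suc e)) - fst (np_vertex b e))"

lemma np_T_eq: "np_T b e = snd (np_vertex b e) + np_slope b e * fst (np_vertex b e)"
  unfolding np_T_def np_slope_def Let_def by (simp add: algebra_simps)

lemma np_slope_mult_eq:
  assumes "1 \<le> e" "Suc e \<le> np_num b"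
  shows "np_slope b e * (fst (np_vertex b (Suc e)) - fst (np_vertex b e))
    = snd (np_vertex b e) - snd (np_vertex b (Suc e))"
  using np_edge_vertices(3)[OF assms] unfolding np_slope_def by simp

lemma np_slope_pos:
  assumes "1 \<le> e" "Suc e \<le> np_num b"
  shows "0 < np_slope b e"
  using extreme_points_newton_polygon_snd_less[OF np_edge_vertices(1-3)[OF assms]]
    np_edge_vertices(3)[OF assms]
  unfolding np_slope_def by simp

lemma np_T_eq_Suc:
  assumes "1 \<le> e" "Suc e \<le> np_num b"
  shows "np_T b e = snd (np_vertex b (Suc e)) + np_slope b e * fst (np_vertex b (Suc e))"
  using np_slope_mult_eq[OF assms] unfolding np_T_eq by (simp add: algebra_simps)

lemma np_T_le_support:
  assumes "1 \<le> e" "Suc e \<le> np_num b" "b (i, j) \<noteq> 0"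
  shows "np_T b e \<le> real j + np_slope b e * real i"
  unfolding np_T_eq
  by (rule support_above_edge[OF np_edge_vertices(1-3)[OF assms(1,2)] np_slope_mult_eq[OF assms(1,2)]
        np_edge_vertices(4)[OF assms(1,2)] assms(3)])

section \<open>Weights of the monomials of \<open>q\<close>\<close>

text \<open>Here (\<gamma>, d) is the vertex (n_k, m_k), and -s1, -s2 are the slopes of the edges to its
  left and right, so that d + s1 \<gamma> = T(k-1) and d + s2 \<gamma> = T(k).\<close>

lemma weight_bound_between_edges:
  fixes x y l \<delta> \<gamma> d s\<^sub>1 s\<^sub>2 :: real
  assumes l: "0 < l" and \<gamma>: "0 < \<gamma>" and x: "0 \<le> x"
    and left_edge: "\<delta> \<le> d + s\<^sub>1 * \<gamma>" and right_edge: "d + s\<^sub>2 * \<gamma> \<le> \<delta>"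
    and l_less: "l * (\<delta> - d) < \<gamma>"
    and above_left: "d + s\<^sub>1 * \<gamma> \<le> y + s\<^sub>1 * x" and above_right: "d + s\<^sub>2 * \<gamma> \<le> y + s\<^sub>2 * x"
  shows "\<delta> * l \<le> x + l * y" and "0 < x \<Longrightarrow> \<delta> * l < x + l * y"
proof -
  have g: "0 < \<gamma> + l * d - \<delta> * l" using l_less by (simp add: algebra_simps)
  have "0 \<le> x + l * y - \<delta> * l \<and> (0 < x \<longrightarrow> 0 < x + l * y - \<delta> * l)"
  proof (cases "x \<le> \<gamma>")
    case True
    define F where "F = x + l * (d + s\<^sub>1 * \<gamma> - s\<^sub>1 * x) - \<delta> * l"
    have "l * (d + s\<^sub>1 * \<gamma> - s\<^sub>1 * x) \<le> l * y" using above_left l by (intro mult_left_mono) auto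
    then have F_le: "F \<le> x + l * y - \<delta> * l" unfolding F_def by simp
    have "\<gamma> * F = x * (\<gamma> + l * d - \<delta> * l) + (\<gamma> - x) * (l * (d + s\<^sub>1 * \<gamma> - \<delta>))"
      unfolding F_def by (simp add: algebra_simps)
    moreover have "0 \<le> (\<gamma> - x) * (l * (d + s\<^sub>1 * \<gamma> - \<delta>))" using True left_edge l by simp
    ultimately have "0 \<le> \<gamma> * F" "0 < x \<Longrightarrow> 0 < \<gamma> * F" using x g by (simp_all add: add_pos_nonneg)
    then have "0 \<le> F" "0 < x \<Longrightarrow> 0 < F" using \<gamma> by (simp_all add: zero_le_mult_iff zero_less_mult_iff)
    then show ?thesis using F_le by auto
  next
    case False
    have "l * (s\<^sub>2 * \<gamma>) \<le> l * (\<delta> - d)" using right_edge l by (intro mult_left_mono) auto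
    then have "(l * s\<^sub>2) * \<gamma> < 1 * \<gamma>" using l_less by (simp add: algebra_simps)
    then have "0 \<le> (x - \<gamma>) * (1 - l * s\<^sub>2)" using False \<gamma> by (simp add: mult_less_cancel_right)
    moreover have "l * (d + s\<^sub>2 * \<gamma> - s\<^sub>2 * x) \<le> l * y" using above_right l by (intro mult_left_mono) auto
    moreover have "(x - \<gamma>) * (1 - l * s\<^sub>2) + (\<gamma> + l * d - \<delta> * l) = x + l * (d + s\<^sub>2 * \<gamma> - s\<^sub>2 * x) - \<delta> * l"
      by (simp add: algebra_simps)
    ultimately show ?thesis using g by linarith
  qed
  then show "\<delta> * l \<le> x + l * y" "0 < x \<Longrightarrow> \<delta> * l < x + l * y" by auto
qed

lemma case4_weight_bounds:
  fixes \<delta> k :: nat and l :: real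
  assumes b00: "b (0, 0) = 0" and b01: "b (0, 1) = 0"
    and k_range: "2 \<le> k" "k \<le> np_num b - 1"
    and case4: "np_T b k \<le> real \<delta>" "real \<delta> \<le> np_T b (k - 1)"
    and l: "0 < l" "l < fst (np_vertex b k) / (real \<delta> - snd (np_vertex b k))"
    and ij: "b (i, j) \<noteq> 0"
  shows "real \<delta> * l \<le> real i + l * real j"
    and "j \<le> 1 \<Longrightarrow> real \<delta> * l < real i + l * real j"
proof -
  define \<gamma> d where "\<gamma> = fst (np_vertex b k)" and "d = snd (np_vertex b k)"
  have left: "1 \<le> k - 1" "Suc (k - 1) \<le> np_num b" and right: "1 \<le> k" "Suc k \<le> np_num b"
    using k_range by auto
  have Suc_pred: "Suc (k - 1) = k" using k_range by simp
  have T_left: "np_T b (k - 1) = d + np_slope b (k - 1) * \<gamma>"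
    using np_T_eq_Suc[OF left] unfolding Suc_pred \<gamma>_def d_def .
  have T_right: "np_T b k = d + np_slope b k * \<gamma>" unfolding np_T_eq \<gamma>_def d_def ..
  have "0 \<le> fst (np_vertex b (k - 1))"
    using np_edge_vertices(1)[OF left] newton_polygon_fst_nonneg unfolding extreme_point_of_def by blast
  then have \<gamma>: "0 < \<gamma>" using np_edge_vertices(3)[OF left] unfolding Suc_pred \<gamma>_def by simp
  then have "d < real \<delta>" using case4(1) T_right np_slope_pos[OF right] by (smt (verit) mult_pos_pos)
  then have l_less: "l * (real \<delta> - d) < \<gamma>" using l(2) unfolding \<gamma>_def d_def by (simp add: less_divide_eq)
  note bounds = weight_bound_between_edges[OF l(1) \<gamma> _ case4(2)[unfolded T_left] case4(1)[unfolded T_right] l_less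
      np_T_le_support[OF left ij, unfolded T_left] np_T_le_support[OF right ij, unfolded T_right]]
  show "real \<delta> * l \<le> real i + l * real j" using bounds(1) by simp
  assume "j \<le> 1"
  then have "0 < i" using ij b00 b01 by (cases i; cases j) auto
  then show "real \<delta> * l < real i + l * real j" using bounds(2) by simp
qed

lemma nat_gap_above:
  obtains \<eta> :: real where "0 < \<eta>" "\<And>i :: nat. c < real i \<Longrightarrow> c + \<eta> \<le> real i"
proof
  show "0 < real_of_int \<lfloor>c\<rfloor> + 1 - c" by linarith
  show "c + (real_of_int \<lfloor>c\<rfloor> + 1 - c) \<le> real i" if "c < real i" for i :: nat
  proof -
    have "\<lfloor>c\<rfloor> < int i" using that by (simp add: floor_less_iff)
    then show ?thesis by linarith
  qed
qed

lemma low_degree_weight_gap: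
  fixes D l :: real
  obtains \<eta> where "0 < \<eta>"
    "\<And>i j :: nat. j \<le> 1 \<Longrightarrow> D < real i + l * real j \<Longrightarrow> D + \<eta> \<le> real i + l * real j"
proof -
  obtain \<eta>\<^sub>0 where \<eta>\<^sub>0: "0 < \<eta>\<^sub>0" "\<And>i :: nat. D < real i \<Longrightarrow> D + \<eta>\<^sub>0 \<le> real i"
    using nat_gap_above[of D] by blast
  obtain \<eta>\<^sub>1 where \<eta>\<^sub>1: "0 < \<eta>\<^sub>1" "\<And>i :: nat. D - l < real i \<Longrightarrow> D - l + \<eta>\<^sub>1 \<le> real i"
    using nat_gap_above[of "D - l"] by blast
  show thesis
  proof
    show "0 < min \<eta>\<^sub>0 \<eta>\<^sub>1" using \<eta>\<^sub>0 \<eta>\<^sub>1 by simp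
    fix i j :: nat assume "j \<le> 1" "D < real i + l * real j"
    then consider "j = 0" "D < real i" | "j = 1" "D - l < real i" by (cases j) auto
    then show "D + min \<eta>\<^sub>0 \<eta>\<^sub>1 \<le> real i + l * real j"
      by cases (use \<eta>\<^sub>0(2) \<eta>\<^sub>1(2) in fastforce)+
  qed
qed

lemma case4_weight_gap:
  fixes \<delta> k :: nat and l :: real
  assumes b00: "b (0, 0) = 0" and b01: "b (0, 1) = 0"
    and k_range: "2 \<le> k" "k \<le> np_num b - 1"
    and case4: "np_T b k \<le> real \<delta>" "real \<delta> \<le> np_T b (k - 1)"
    and l: "0 < l" "l < fst (np_vertex b k) / (real \<delta> - snd (np_vertex b k))"
  obtains \<eta> where "0 < \<eta>"
    "\<And>i j. b (i, j) \<noteq> 0 \<Longrightarrow> real \<delta> * l \<le> real i + l * real j"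
    "\<And>i j. b (i, j) \<noteq> 0 \<Longrightarrow> j \<le> 1 \<Longrightarrow> real \<delta> * l + \<eta> \<le> real i + l * real j"
proof -
  note weights = case4_weight_bounds[OF b00 b01 k_range case4 l]
  obtain \<eta> where "0 < \<eta>" and gap: "\<And>i j :: nat. j \<le> 1 \<Longrightarrow> real \<delta> * l < real i + l * real j
      \<Longrightarrow> real \<delta> * l + \<eta> \<le> real i + l * real j"
    using low_degree_weight_gap[of "real \<delta> * l" l] by blast
  with weights show thesis using that by blast
qed

section \<open>Estimates for \<open>p\<close> and \<open>q\<close>\<close>

lemma powr_le_powr_times_powr:
  fixes t \<rho> E e :: real
  assumes "0 < t" "t \<le> \<rho>" "E \<le> e"
  shows "t powr e \<le> t powr E * \<rho> powr (e - E)"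
proof -
  have "t powr e = t powr E * t powr (e - E)" using assms(1) by (simp add: powr_add[symmetric])
  also have "\<dots> \<le> t powr E * \<rho> powr (e - E)"
    using assms by (intro mult_left_mono powr_mono2) auto
  finally show ?thesis .
qed

lemma monomial_le_powr:
  fixes t w r l :: real
  assumes "0 < t" "0 \<le> w" "w \<le> r * t powr l"
  shows "t ^ i * w ^ j \<le> r ^ j * t powr (real i + l * real j)"
proof -
  have "w ^ j \<le> (r * t powr l) ^ j" using assms(2,3) by (intro power_mono) auto
  also have "\<dots> = r ^ j * t powr (l * real j)"
    using assms(1) by (simp add: power_mult_distrib powr_realpow[symmetric] powr_powr)
  finally have "t ^ i * w ^ j \<le> t ^ i * (r ^ j * t powr (l * real j))"
    using assms(1) by (intro mult_left_mono) auto
  then show ?thesis using assms(1) by (simp add: powr_add powr_realpow)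
qed

lemma monomial_bound_low_degree:
  fixes t w r \<rho> l D \<eta> :: real
  assumes t: "0 < t" "t \<le> \<rho>" and \<rho>1: "\<rho> \<le> 1" and r: "0 \<le> r" "r \<le> 1"
    and w: "0 \<le> w" "w \<le> r * t powr l" and l: "0 \<le> l"
    and j: "j \<le> 1" and weight: "D + \<eta> \<le> real i + l * real j"
  shows "t ^ i * w ^ j \<le> \<rho> powr (real (i + j) - (D + \<eta> + 2)) * (t powr D * t powr \<eta>)"
proof -
  have "r ^ j \<le> 1" using r by (intro power_le_one) auto
  then have "r ^ j * t powr (real i + l * real j) \<le> 1 * t powr (real i + l * real j)"
    by (intro mult_right_mono) auto
  then have "t ^ i * w ^ j \<le> t powr (real i + l * real j)" using monomial_le_powr[OF t(1) w, of i j] by simp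
  also have "\<dots> \<le> t powr (D + \<eta>) * \<rho> powr (real i + l * real j - (D + \<eta>))"
    by (rule powr_le_powr_times_powr[OF t weight])
  also have "\<dots> \<le> t powr (D + \<eta>) * \<rho> powr (real (i + j) - (D + \<eta> + 2))"
    using t j \<rho>1 mult_nonneg_nonneg[OF l, of "real j"] by (intro mult_left_mono powr_mono') auto
  finally show ?thesis by (simp add: powr_add mult.commute)
qed

lemma monomial_bound_high_degree:
  fixes t w r \<rho> l D \<eta> :: real
  assumes t: "0 < t" "t \<le> \<rho>" and \<rho>1: "\<rho> \<le> 1" and r: "0 \<le> r" "r \<le> \<rho>"
    and w: "0 \<le> w" "w \<le> r * t powr l" and l: "0 \<le> l" and \<eta>: "0 \<le> \<eta>"
    and j: "2 \<le> j" and weight: "D \<le> real i + l * real j"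
  shows "t ^ i * w ^ j \<le> \<rho> powr (real (i + j) - (D + \<eta> + 2)) * (t powr D * r\<^sup>2)"
proof -
  have \<rho>: "0 < \<rho>" using t by simp
  obtain m where "j = Suc (Suc m)" using less_imp_Suc_add[of 1 j] j by auto
  then have "r ^ j = r\<^sup>2 * r ^ (j - 2)" by (simp add: power2_eq_square)
  also have "\<dots> \<le> r\<^sup>2 * \<rho> ^ (j - 2)" using r by (intro mult_left_mono power_mono) auto
  finally have r_pow: "r ^ j \<le> r\<^sup>2 * \<rho> ^ (j - 2)" .
  have "t powr (real i + l * real j) \<le> t powr D * \<rho> powr (real i + l * real j - D)"
    by (rule powr_le_powr_times_powr[OF t weight])
  also have "\<dots> \<le> t powr D * \<rho> powr (real i - (D + \<eta>))"
    using \<eta> \<rho> \<rho>1 mult_nonneg_nonneg[OF l, of "real j"] by (intro mult_left_mono powr_mono') auto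
  finally have t_pow: "t powr (real i + l * real j) \<le> t powr D * \<rho> powr (real i - (D + \<eta>))" .
  have "real (j - 2) = real j - 2" using j by simp
  then have "\<rho> ^ (j - 2) = \<rho> powr (real j - 2)" using powr_realpow[OF \<rho>, of "j - 2"] by simp
  then have \<rho>_pow: "\<rho> ^ (j - 2) * \<rho> powr (real i - (D + \<eta>)) = \<rho> powr (real (i + j) - (D + \<eta> + 2))"
    by (simp only: powr_add[symmetric]) (simp add: algebra_simps)
  have "r ^ j * t powr (real i + l * real j)
      \<le> (r\<^sup>2 * \<rho> ^ (j - 2)) * (t powr D * \<rho> powr (real i - (D + \<eta>)))"
    using r_pow t_pow r by (intro mult_mono) auto
  also have "\<dots> = \<rho> powr (real (i + j) - (D + \<eta> + 2)) * (t powr D * r\<^sup>2)"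
    unfolding \<rho>_pow[symmetric] by (simp add: algebra_simps)
  finally show ?thesis using monomial_le_powr[OF t(1) w, of i j] by linarith
qed

lemma monomial_bound:
  fixes t w r \<rho> l D \<eta> :: real
  assumes t: "0 < t" "t \<le> \<rho>" and \<rho>1: "\<rho> \<le> 1" and r: "0 \<le> r" "r \<le> \<rho>"
    and w: "0 \<le> w" "w \<le> r * t powr l" and l: "0 \<le> l" and \<eta>: "0 \<le> \<eta>"
    and weight: "D \<le> real i + l * real j"
    and low_weight: "j \<le> 1 \<Longrightarrow> D + \<eta> \<le> real i + l * real j"
  shows "t ^ i * w ^ j \<le> \<rho> ^ i * \<rho> ^ j * (\<rho> powr (-(D + \<eta> + 2)) * (t powr D * (t powr \<eta> + r\<^sup>2)))"
proof -
  have "\<rho> powr (real (i + j) - (D + \<eta> + 2)) = \<rho> powr real i * \<rho> powr real j * \<rho> powr (-(D + \<eta> + 2))"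
    by (simp only: powr_add[symmetric]) (simp add: algebra_simps)
  also have "\<dots> = \<rho> ^ i * \<rho> ^ j * \<rho> powr (-(D + \<eta> + 2))" using t by (simp add: powr_realpow)
  finally have \<rho>_pow: "\<rho> powr (real (i + j) - (D + \<eta> + 2)) = \<rho> ^ i * \<rho> ^ j * \<rho> powr (-(D + \<eta> + 2))" .
  have "t ^ i * w ^ j \<le> \<rho> powr (real (i + j) - (D + \<eta> + 2)) * (t powr D * (t powr \<eta> + r\<^sup>2))"
  proof (cases "j \<le> 1")
    case True
    then have "t ^ i * w ^ j \<le> \<rho> powr (real (i + j) - (D + \<eta> + 2)) * (t powr D * t powr \<eta>)"
      using r \<rho>1 by (intro monomial_bound_low_degree[OF t \<rho>1 r(1) _ w l True low_weight]) auto
    also have "\<dots> \<le> \<rho> powr (real (i + j) - (D + \<eta> + 2)) * (t powr D * (t powr \<eta> + r\<^sup>2))"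
      by (intro mult_left_mono) auto
    finally show ?thesis .
  next
    case False
    then have "t ^ i * w ^ j \<le> \<rho> powr (real (i + j) - (D + \<eta> + 2)) * (t powr D * r\<^sup>2)"
      by (intro monomial_bound_high_degree[OF t \<rho>1 r w l \<eta> _ weight]) auto
    also have "\<dots> \<le> \<rho> powr (real (i + j) - (D + \<eta> + 2)) * (t powr D * (t powr \<eta> + r\<^sup>2))"
      by (intro mult_left_mono) auto
    finally show ?thesis .
  qed
  then show ?thesis unfolding \<rho>_pow by (simp add: ac_simps)
qed

lemma norm_infsum_le_infsum_mult:
  fixes f :: "'a \<Rightarrow> 'b::banach" and g :: "'a \<Rightarrow> real"
  assumes f: "(\<lambda>x. norm (f x)) summable_on A" and g: "g summable_on A"
    and le: "\<And>x. x \<in> A \<Longrightarrow> norm (f x) \<le> g x * B"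
  shows "norm (infsum f A) \<le> infsum g A * B"
proof -
  have "norm (infsum f A) \<le> (\<Sum>\<^sub>\<infinity>x\<in>A. norm (f x))" by (rule norm_infsum_bound[OF f])
  also have "\<dots> \<le> (\<Sum>\<^sub>\<infinity>x\<in>A. g x * B)" by (rule infsum_mono[OF f summable_on_cmult_left[OF g] le])
  also have "\<dots> = infsum g A * B" by (rule infsum_cmult_left[OF g])
  finally show ?thesis .
qed

lemma q_estimate:
  fixes q :: "complex \<Rightarrow> complex \<Rightarrow> complex" and b :: "nat \<times> nat \<Rightarrow> complex" and R l D \<eta> :: real
  assumes R: "0 < R"
    and q_summable: "\<And>z w. cmod z < R \<Longrightarrow> cmod w < R \<Longrightarrow>
           (\<lambda>(i, j). norm (b (i, j) * z ^ i * w ^ j)) summable_on UNIV"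
    and q_eq: "\<And>z w. cmod z < R \<Longrightarrow> cmod w < R \<Longrightarrow>
           q z w = (\<Sum>\<^sub>\<infinity>(i, j). b (i, j) * z ^ i * w ^ j)"
    and l: "0 \<le> l" and \<eta>: "0 \<le> \<eta>"
    and weight: "\<And>i j. b (i, j) \<noteq> 0 \<Longrightarrow> D \<le> real i + l * real j"
    and low_weight: "\<And>i j. b (i, j) \<noteq> 0 \<Longrightarrow> j \<le> 1 \<Longrightarrow> D + \<eta> \<le> real i + l * real j"
  obtains \<rho> K where "0 < \<rho>" "0 \<le> K"
    "\<And>r z w. 0 \<le> r \<Longrightarrow> r \<le> \<rho> \<Longrightarrow> 0 < cmod z \<Longrightarrow> cmod z \<le> \<rho> \<Longrightarrow> cmod w \<le> r * cmod z powr l \<Longrightarrow>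
       cmod (q z w) \<le> K * (cmod z powr D * (cmod z powr \<eta> + r\<^sup>2))"
proof -
  define \<rho> where "\<rho> = min (R / 2) (1 / 2)"
  have \<rho>: "0 < \<rho>" "\<rho> < R" "\<rho> \<le> 1" unfolding \<rho>_def using R by auto
  define g where "g = (\<lambda>(i, j). norm (b (i, j) * complex_of_real \<rho> ^ i * complex_of_real \<rho> ^ j))"
  define K where "K = (\<Sum>\<^sub>\<infinity>ij. g ij) * \<rho> powr (-(D + \<eta> + 2))"
  have g_summable: "g summable_on UNIV" unfolding g_def using \<rho> by (intro q_summable) auto
  have "0 \<le> K" unfolding K_def g_def by (intro mult_nonneg_nonneg infsum_nonneg) (auto split: prod.split)
  moreover have "cmod (q z w) \<le> K * (cmod z powr D * (cmod z powr \<eta> + r\<^sup>2))"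
    if r: "0 \<le> r" "r \<le> \<rho>" and z: "0 < cmod z" "cmod z \<le> \<rho>" and w: "cmod w \<le> r * cmod z powr l"
    for r z w
  proof -
    define B where "B = \<rho> powr (-(D + \<eta> + 2)) * (cmod z powr D * (cmod z powr \<eta> + r\<^sup>2))"
    define f where "f = (\<lambda>(i, j). b (i, j) * z ^ i * w ^ j)"
    have "cmod z powr l \<le> 1" using z \<rho> l powr_mono2[of l "cmod z" 1] by simp
    then have "cmod w \<le> \<rho>" using w r by (smt (verit) mult_left_le)
    then have zw: "cmod z < R" "cmod w < R" using z \<rho> by linarith+
    have "(\<lambda>ij. norm (f ij)) = (\<lambda>(i, j). norm (b (i, j) * z ^ i * w ^ j))"
      unfolding f_def by (simp add: fun_eq_iff)
    then have f_summable: "(\<lambda>ij. norm (f ij)) summable_on UNIV" using q_summable[OF zw] by simp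
    have "norm (f (i, j)) \<le> g (i, j) * B" for i j
    proof (cases "b (i, j) = 0")
      case False
      have "cmod z ^ i * cmod w ^ j \<le> \<rho> ^ i * \<rho> ^ j * B" unfolding B_def
        by (rule monomial_bound[OF z(1,2) \<rho>(3) r _ w l \<eta> weight[OF False] low_weight[OF False]]) simp
      then have "cmod (b (i, j)) * (cmod z ^ i * cmod w ^ j) \<le> cmod (b (i, j)) * (\<rho> ^ i * \<rho> ^ j * B)"
        by (intro mult_left_mono) auto
      then show ?thesis unfolding f_def g_def using \<rho>(1) by (simp add: norm_mult norm_power ac_simps)
    qed (simp add: f_def g_def)
    then have "cmod (q z w) \<le> (\<Sum>\<^sub>\<infinity>ij. g ij) * B"
      using q_eq[OF zw] norm_infsum_le_infsum_mult[OF f_summable g_summable] unfolding f_def by force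
    then show ?thesis unfolding K_def B_def by (simp add: ac_simps)
  qed
  ultimately show thesis using that \<rho>(1) by blast
qed

lemma p_estimate:
  fixes p h :: "complex \<Rightarrow> complex" and a :: complex and \<delta> :: nat and R :: real
  assumes a: "a \<noteq> 0" and \<delta>: "2 \<le> \<delta>" and R: "0 < R" and h: "isCont h 0"
    and p_eq: "\<And>z. z \<in> ball 0 R \<Longrightarrow> p z = a * z ^ \<delta> + z ^ (\<delta> + 1) * h z"
  obtains \<tau> where "0 < \<tau>"
    "\<And>z. 0 < cmod z \<Longrightarrow> cmod z < \<tau> \<Longrightarrow> cmod a / 2 * cmod z ^ \<delta> \<le> cmod (p z) \<and> cmod (p z) < cmod z"
proof -
  have "((\<lambda>z. z * h z) \<longlongrightarrow> 0) (at 0)"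
    using tendsto_mult[OF tendsto_ident_at h[unfolded isCont_def]] by simp
  from tendstoD[OF this, of "cmod a / 2"]
  have "eventually (\<lambda>z. cmod (z * h z) < cmod a / 2) (at 0)" using a by (simp add: dist_norm)
  then obtain \<tau>\<^sub>1 where \<tau>\<^sub>1: "0 < \<tau>\<^sub>1" "\<And>z. z \<noteq> 0 \<Longrightarrow> cmod z < \<tau>\<^sub>1 \<Longrightarrow> cmod (z * h z) < cmod a / 2"
    by (auto simp: eventually_at dist_norm)
  define \<tau> where "\<tau> = min (min \<tau>\<^sub>1 R) (min 1 (2 / (3 * cmod a)))"
  show thesis
  proof (rule that)
    show "0 < \<tau>" unfolding \<tau>_def using \<tau>\<^sub>1(1) R a by simp
    fix z assume z: "0 < cmod z" "cmod z < \<tau>"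
    have small: "cmod (z * h z) < cmod a / 2" using \<tau>\<^sub>1(2)[of z] z unfolding \<tau>_def by auto
    have "p z = z ^ \<delta> * (a + z * h z)" using p_eq[of z] z unfolding \<tau>_def by (simp add: algebra_simps)
    then have norm_p: "cmod (p z) = cmod z ^ \<delta> * cmod (a + z * h z)" by (simp add: norm_mult norm_power)
    have "cmod a - cmod (z * h z) \<le> cmod (a + z * h z)" by (rule norm_diff_ineq)
    then have "cmod a / 2 \<le> cmod (a + z * h z)" using small by simp
    then have "cmod a / 2 * cmod z ^ \<delta> \<le> cmod (p z)"
      unfolding norm_p by (subst mult.commute) (intro mult_left_mono; simp)
    moreover have "cmod (p z) < cmod z"
    proof -
      have "cmod (a + z * h z) \<le> 3 / 2 * cmod a" using norm_triangle_ineq[of a "z * h z"] small by simp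
      moreover have "cmod z ^ \<delta> \<le> cmod z ^ 2" using z \<delta> unfolding \<tau>_def by (intro power_decreasing) auto
      ultimately have "cmod (p z) \<le> cmod z ^ 2 * (3 / 2 * cmod a)"
        unfolding norm_p by (intro mult_mono) auto
      also have "\<dots> = cmod z * (cmod z * (3 / 2 * cmod a))" by (simp add: power2_eq_square)
      also have "\<dots> < cmod z * 1"
        using z a unfolding \<tau>_def by (intro mult_strict_left_mono) (auto simp: field_simps)
      finally show ?thesis by simp
    qed
    ultimately show "cmod a / 2 * cmod z ^ \<delta> \<le> cmod (p z) \<and> cmod (p z) < cmod z" ..
  qed
qed

lemma small_radii:
  fixes A K \<eta> \<rho> \<epsilon> :: real
  assumes A: "0 < A" and K: "0 \<le> K" and \<eta>: "0 < \<eta>" and \<rho>: "0 < \<rho>" and \<epsilon>: "0 < \<epsilon>"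
  obtains r\<^sub>1 r\<^sub>2 where "0 < r\<^sub>1" "r\<^sub>1 < \<epsilon>" "r\<^sub>1 \<le> \<rho>" "0 < r\<^sub>2" "r\<^sub>2 < \<epsilon>" "r\<^sub>2 \<le> \<rho>"
    "\<And>t. 0 < t \<Longrightarrow> t < r\<^sub>1 \<Longrightarrow> K * (t powr \<eta> + r\<^sub>2\<^sup>2) < r\<^sub>2 * A"
proof -
  define r\<^sub>2 where "r\<^sub>2 = min (min \<rho> (\<epsilon> / 2)) (A / (2 * (K + 1)))"
  define r\<^sub>1 where "r\<^sub>1 = min (min \<rho> (\<epsilon> / 2)) ((r\<^sub>2 * A / (2 * (K + 1))) powr (1 / \<eta>))"
  have "r\<^sub>2 \<le> A / (2 * (K + 1))" unfolding r\<^sub>2_def by simp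
  then have r\<^sub>2: "0 < r\<^sub>2" "r\<^sub>2 < \<epsilon>" "r\<^sub>2 \<le> \<rho>" "r\<^sub>2 * (2 * (K + 1)) \<le> A"
    unfolding r\<^sub>2_def using A K \<rho> \<epsilon> by (auto simp: le_divide_eq)
  have r\<^sub>1: "0 < r\<^sub>1" "r\<^sub>1 < \<epsilon>" "r\<^sub>1 \<le> \<rho>" unfolding r\<^sub>1_def using r\<^sub>2 A K \<rho> \<epsilon> by auto
  have "K * (t powr \<eta> + r\<^sub>2\<^sup>2) < r\<^sub>2 * A" if t: "0 < t" "t < r\<^sub>1" for t
  proof -
    have "t powr \<eta> < ((r\<^sub>2 * A / (2 * (K + 1))) powr (1 / \<eta>)) powr \<eta>"
      using t \<eta> unfolding r\<^sub>1_def by (intro powr_less_mono2) auto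
    also have "\<dots> = r\<^sub>2 * A / (2 * (K + 1))" using r\<^sub>2(1) A K \<eta> by (simp add: powr_powr)
    finally have "(K + 1) * t powr \<eta> \<le> r\<^sub>2 * A / 2" using K by (simp add: field_simps)
    moreover have "(K + 1) * r\<^sub>2\<^sup>2 \<le> r\<^sub>2 * A / 2"
      using r\<^sub>2(1,4) mult_left_mono[OF r\<^sub>2(4), of r\<^sub>2] by (simp add: power2_eq_square algebra_simps)
    moreover have "0 < t powr \<eta> + r\<^sub>2\<^sup>2" using t by (simp add: add_pos_nonneg)
    ultimately show ?thesis by (simp add: algebra_simps)
  qed
  with r\<^sub>1 r\<^sub>2 show thesis using that by blast
qed

lemma U_region_invariant:
  fixes p :: "complex \<Rightarrow> complex" and q :: "complex \<Rightarrow> complex \<Rightarrow> complex" and c l :: real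
  assumes l: "0 < l" and c: "0 \<le> c"
    and p_bound: "\<And>z. 0 < cmod z \<Longrightarrow> cmod z < r\<^sub>1 \<Longrightarrow> c * cmod z ^ \<delta> \<le> cmod (p z) \<and> cmod (p z) < cmod z"
    and q_bound: "\<And>z w. 0 < cmod z \<Longrightarrow> cmod z < r\<^sub>1 \<Longrightarrow> cmod w < r\<^sub>2 * cmod z powr l \<Longrightarrow>
       cmod (q z w) < r\<^sub>2 * (c powr l * cmod z powr (real \<delta> * l))"
  shows "(\<lambda>(z, w). (p z, q z w)) ` U_region l r\<^sub>1 r\<^sub>2 \<subseteq> U_region l r\<^sub>1 r\<^sub>2"
proof clarify
  fix z w assume "(z, w) \<in> U_region l r\<^sub>1 r\<^sub>2"
  then have z: "cmod z < r\<^sub>1" and w: "cmod w < r\<^sub>2 * cmod z powr l" unfolding U_region_def by auto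
  have "0 < cmod z" \<comment> \<open>as \<open>0 powr l = 0\<close>, the region contains no point with \<open>z = 0\<close>\<close>
    using w by (cases "z = 0") auto
  have "0 < r\<^sub>2" using w by (smt (verit) norm_ge_zero powr_ge_zero mult_nonpos_nonneg)
  note p = p_bound[OF \<open>0 < cmod z\<close> z]
  have "cmod (q z w) < r\<^sub>2 * (c powr l * cmod z powr (real \<delta> * l))"
    by (rule q_bound[OF \<open>0 < cmod z\<close> z w])
  also have "cmod z powr (real \<delta> * l) = (cmod z ^ \<delta>) powr l"
    using \<open>0 < cmod z\<close> by (simp add: powr_powr flip: powr_realpow)
  also have "c powr l * (cmod z ^ \<delta>) powr l = (c * cmod z ^ \<delta>) powr l" by (simp add: powr_mult)
  also have "\<dots> \<le> cmod (p z) powr l" using p c l by (intro powr_mono2) auto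
  finally have "cmod (q z w) < r\<^sub>2 * cmod (p z) powr l" using \<open>0 < r\<^sub>2\<close> by simp
  then show "(p z, q z w) \<in> U_region l r\<^sub>1 r\<^sub>2" using p z unfolding U_region_def by simp
qed

lemma exists_invariant_U_region:
  fixes p :: "complex \<Rightarrow> complex" and q :: "complex \<Rightarrow> complex \<Rightarrow> complex" and c l \<eta> \<rho> \<tau> K \<epsilon> :: real
  assumes l: "0 < l" and c: "0 < c" and \<eta>: "0 < \<eta>" and \<rho>: "0 < \<rho>" and K: "0 \<le> K" and \<tau>: "0 < \<tau>"
    and \<epsilon>: "0 < \<epsilon>"
    and p_est: "\<And>z. 0 < cmod z \<Longrightarrow> cmod z < \<tau> \<Longrightarrow> c * cmod z ^ \<delta> \<le> cmod (p z) \<and> cmod (p z) < cmod z"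
    and q_est: "\<And>r z w. 0 \<le> r \<Longrightarrow> r \<le> \<rho> \<Longrightarrow> 0 < cmod z \<Longrightarrow> cmod z \<le> \<rho> \<Longrightarrow>
      cmod w \<le> r * cmod z powr l \<Longrightarrow> cmod (q z w) \<le> K * (cmod z powr (real \<delta> * l) * (cmod z powr \<eta> + r\<^sup>2))"
  shows "\<exists>r\<^sub>1 r\<^sub>2. 0 < r\<^sub>1 \<and> r\<^sub>1 < \<epsilon> \<and> 0 < r\<^sub>2 \<and> r\<^sub>2 < \<epsilon> \<and>
    (\<lambda>(z, w). (p z, q z w)) ` U_region l r\<^sub>1 r\<^sub>2 \<subseteq> U_region l r\<^sub>1 r\<^sub>2"
proof -
  have "0 < c powr l" "0 < min \<rho> \<tau>" using c \<rho> \<tau> by simp_all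
  then obtain r\<^sub>1 r\<^sub>2 where r: "0 < r\<^sub>1" "r\<^sub>1 < \<epsilon>" "r\<^sub>1 \<le> min \<rho> \<tau>" "0 < r\<^sub>2" "r\<^sub>2 < \<epsilon>" "r\<^sub>2 \<le> min \<rho> \<tau>"
    and small: "\<And>t. 0 < t \<Longrightarrow> t < r\<^sub>1 \<Longrightarrow> K * (t powr \<eta> + r\<^sub>2\<^sup>2) < r\<^sub>2 * c powr l"
    using small_radii[OF _ K \<eta> _ \<epsilon>] by blast
  have "(\<lambda>(z, w). (p z, q z w)) ` U_region l r\<^sub>1 r\<^sub>2 \<subseteq> U_region l r\<^sub>1 r\<^sub>2"
  proof (rule U_region_invariant[OF l less_imp_le[OF c]])
    show "c * cmod z ^ \<delta> \<le> cmod (p z) \<and> cmod (p z) < cmod z" if "0 < cmod z" "cmod z < r\<^sub>1" for z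
      using p_est[OF that(1)] that(2) r(3) by simp
    fix z w assume z: "0 < cmod z" "cmod z < r\<^sub>1" and w: "cmod w < r\<^sub>2 * cmod z powr l"
    have "cmod (q z w) \<le> cmod z powr (real \<delta> * l) * (K * (cmod z powr \<eta> + r\<^sub>2\<^sup>2))"
      using q_est[of r\<^sub>2 z w] z w r by (simp add: ac_simps)
    also have "\<dots> < cmod z powr (real \<delta> * l) * (r\<^sub>2 * c powr l)"
      using small[OF z] z by (intro mult_strict_left_mono) auto
    finally show "cmod (q z w) < r\<^sub>2 * (c powr l * cmod z powr (real \<delta> * l))" by (simp add: ac_simps)
  qed
  with r show ?thesis by blast
qed

theorem theorem2p13:
  fixes p h :: "complex \<Rightarrow> complex" and q :: "complex \<Rightarrow> complex \<Rightarrow> complex"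
    and b :: "nat \<times> nat \<Rightarrow> complex" and a :: complex and \<delta> k :: nat and R :: real
  assumes R_pos: "R > 0"
    and delta: "\<delta> \<ge> 2" and a_nz: "a \<noteq> 0"
    and h_holo: "h holomorphic_on ball 0 R"
    and p_eq: "\<And>z. z \<in> ball 0 R \<Longrightarrow> p z = a * z ^ \<delta> + z ^ (\<delta> + 1) * h z"
    and q_summable: "\<And>z w. cmod z < R \<Longrightarrow> cmod w < R \<Longrightarrow>
           (\<lambda>(i, j). norm (b (i, j) * z ^ i * w ^ j)) summable_on UNIV"
    and q_eq: "\<And>z w. cmod z < R \<Longrightarrow> cmod w < R \<Longrightarrow>
           q z w = (\<Sum>\<^sub>\<infinity>(i, j). b (i, j) * z ^ i * w ^ j)"
    and b00: "b (0, 0) = 0" and b01: "b (0, 1) = 0"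
    and s_gt: "np_num b > 2"
    and k_range: "2 \<le> k" "k \<le> np_num b - 1"
    and case4: "np_T b k \<le> real \<delta>" "real \<delta> \<le> np_T b (k - 1)"
  shows "\<forall>l. 0 < l \<and> l < fst (np_vertex b k) / (real \<delta> - snd (np_vertex b k)) \<longrightarrow>
           (\<forall>\<epsilon>>0. \<exists>r1 r2. 0 < r1 \<and> r1 < \<epsilon> \<and> 0 < r2 \<and> r2 < \<epsilon> \<and>
              (\<lambda>(z, w). (p z, q z w)) ` U_region l r1 r2 \<subseteq> U_region l r1 r2)"
proof (intro allI impI)
  fix l \<epsilon> :: real
  assume l: "0 < l \<and> l < fst (np_vertex b k) / (real \<delta> - snd (np_vertex b k))" and \<epsilon>: "0 < \<epsilon>"
  obtain \<eta> where \<eta>: "0 < \<eta>"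
    and weight: "\<And>i j. b (i, j) \<noteq> 0 \<Longrightarrow> real \<delta> * l \<le> real i + l * real j"
    and low_weight: "\<And>i j. b (i, j) \<noteq> 0 \<Longrightarrow> j \<le> 1 \<Longrightarrow> real \<delta> * l + \<eta> \<le> real i + l * real j"
    using case4_weight_gap[OF b00 b01 k_range case4 conjunct1[OF l] conjunct2[OF l]] by blast
  obtain \<rho> K where "0 < \<rho>" "0 \<le> K" and q_est: "\<And>r z w. 0 \<le> r \<Longrightarrow> r \<le> \<rho> \<Longrightarrow> 0 < cmod z \<Longrightarrow>
      cmod z \<le> \<rho> \<Longrightarrow> cmod w \<le> r * cmod z powr l \<Longrightarrow>
      cmod (q z w) \<le> K * (cmod z powr (real \<delta> * l) * (cmod z powr \<eta> + r\<^sup>2))"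
    using q_estimate[OF R_pos q_summable q_eq less_imp_le[OF conjunct1[OF l]] less_imp_le[OF \<eta>]
      weight low_weight]
    by blast
  have "isCont h 0"
    using holomorphic_on_imp_continuous_on[OF h_holo] continuous_on_interior R_pos
    by (metis centre_in_ball interior_ball)
  then obtain \<tau> where "0 < \<tau>" and p_est: "\<And>z. 0 < cmod z \<Longrightarrow> cmod z < \<tau> \<Longrightarrow>
      cmod a / 2 * cmod z ^ \<delta> \<le> cmod (p z) \<and> cmod (p z) < cmod z"
    using p_estimate[OF a_nz delta R_pos _ p_eq] by blast
  show "\<exists>r1 r2. 0 < r1 \<and> r1 < \<epsilon> \<and> 0 < r2 \<and> r2 < \<epsilon> \<and>
      (\<lambda>(z, w). (p z, q z w)) ` U_region l r1 r2 \<subseteq> U_region l r1 r2"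
    using exists_invariant_U_region[OF conjunct1[OF l] _ \<eta> \<open>0 < \<rho>\<close> \<open>0 \<le> K\<close> \<open>0 < \<tau>\<close> \<epsilon> p_est q_est] a_nz
    by simp
qed

end
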